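(* Let $\Delta$ be a connected finite two-dimensional simplicial complex (triangulation) in $\mathbb{R}^2$ whose support is homotopy equivalent to a disk, let $r\ge 0$ and $k\ge r$ be integers, and let $f_1^0$ be the number of interior edges of $\Delta$. Let $\gamma_1,\dots,\gamma_{f_0^0}$ be an ordering of the interior vertices such that each pair of consecutive vertices $\gamma_i,\gamma_{i+1}$ are corners of a common triangle of $\Delta$. For each $i$ let $\tilde t_i$ be the number of distinct slopes among the edges joining $\gamma_i$ to a boundary vertex or to one of $\gamma_1,\dots,\gamma_{i-1}$; if $\tilde t_i>1$ put $\tilde\Omega_i=\lfloor \tilde t_i r/(\tilde t_i-1)\rfloor+1$, $\tilde a_i=\tilde t_i(r+1)+(1-\tilde t_i)\tilde\Omega_i$, $\tilde b_i=\tilde t_i-1-\tilde a_i$, and if $\tilde t_i\le 1$ put $\tilde a_i=\tilde b_i=\tilde\Omega_i=0$. Then \[\binom{k+2}{2}+f_1^0\binom{k+2-(r+1)}{2}-\sum_{i=1}^{f_0^0}\Big[\tilde t_i\binom{k+2-(r+1)}{2}-\tilde b_i\binom{k+2-\tilde\Omega_i}{2}-\tilde a_i\binom{k+2-(\tilde\Omega_i+1)}{2}\Big]\] \[=\binom{k+2}{2}+f_1^0\binom{k-r+1}{2}-f_0^0\Big[\binom{k+2}{2}-\binom{r+2}{2}\Big]+\sum_{i=1}^{f_0^0}\sum_{j=1}^{k-r}(r+j+1-j\,\tilde t_i)_+ ,\] i.e. the upper bound on $\dim C_k^r(\Delta)$ given by the first expression coincides with Schumaker's upper bound given by the second.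
   Context: An interior edge is an edge not contained in the boundary of the support; an interior vertex is a vertex not on the boundary. $C_k^r(\Delta)$ is the space of $C^r$ functions on the support that are polynomials of degree $\le k$ on each triangle. $(x)_+=\max(x,0)$; an empty sum is $0$. Binomial coefficients follow the convention $\binom{m}{2}=m(m-1)/2$ for integers $m\ge 2$ and $\binom{m}{2}=0$ for $m<2$. *)

theory Defs
  imports "HOL-Analysis.Analysis"
begin

definition tri_support :: "(real^2) set set \<Rightarrow> (real^2) set" where
  "tri_support T = (\<Union>t\<in>T. convex hull t)"

definition is_triangulation :: "(real^2) set set \<Rightarrow> bool" where
  "is_triangulation T \<longleftrightarrow> finite T \<and> T \<noteq> {} \<and>
     (\<forall>t\<in>T. card t = 3 \<and> \<not> affine_dependent t) \<and>
     (\<forall>s\<in>T. \<forall>t\<in>T. convex hull s \<inter> convex hull t = convex hull (s \<inter> t))"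

definition tri_edges :: "(real^2) set set \<Rightarrow> (real^2) set set" where
  "tri_edges T = {e. card e = 2 \<and> (\<exists>t\<in>T. e \<subseteq> t)}"

definition tri_vertices :: "(real^2) set set \<Rightarrow> (real^2) set" where
  "tri_vertices T = \<Union>T"

definition interior_edges :: "(real^2) set set \<Rightarrow> (real^2) set set" where
  "interior_edges T = {e \<in> tri_edges T. \<not> (convex hull e \<subseteq> frontier (tri_support T))}"

definition interior_vertices :: "(real^2) set set \<Rightarrow> (real^2) set" where
  "interior_vertices T = {v \<in> tri_vertices T. v \<notin> frontier (tri_support T)}"

text \<open>The slope of the edge from p to w, encoded as the line direction span{w - p}.\<close>
definition slope_dir :: "real^2 \<Rightarrow> real^2 \<Rightarrow> (real^2) set" where
  "slope_dir p w = span {w - p}"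

definition t_tilde :: "(real^2) set set \<Rightarrow> (nat \<Rightarrow> real^2) \<Rightarrow> nat \<Rightarrow> nat" where
  "t_tilde T \<gamma> i = card (slope_dir (\<gamma> i) `
     {w. {\<gamma> i, w} \<in> tri_edges T \<and>
         (w \<in> frontier (tri_support T) \<or> (\<exists>j. 1 \<le> j \<and> j < i \<and> w = \<gamma> j))})"

definition Omega_t :: "nat \<Rightarrow> nat \<Rightarrow> int" where
  "Omega_t t r = (if t > 1 then \<lfloor>real t * real r / (real t - 1)\<rfloor> + 1 else 0)"

definition a_t :: "nat \<Rightarrow> nat \<Rightarrow> int" where
  "a_t t r = (if t > 1 then int t * (int r + 1) + (1 - int t) * Omega_t t r else 0)"

definition b_t :: "nat \<Rightarrow> nat \<Rightarrow> int" where
  "b_t t r = (if t > 1 then int t - 1 - a_t t r else 0)"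

definition bin2 :: "int \<Rightarrow> int" where
  "bin2 m = (if m \<ge> 2 then m * (m - 1) div 2 else 0)"

definition pos_part :: "int \<Rightarrow> int" where
  "pos_part x = max x 0"

end

theory Submission
  imports Defs
begin

text \<open>The identity holds vertex by vertex, for every value t of the slope count and
  every k \<ge> r. Both sides vanish at k = r, and raising k by one changes each binomial
  bin2 m by the positive part of m, so it suffices to compare the increments. For t > 1,
  \<Omega> = \<lfloor>tr/(t-1)\<rfloor> + 1 is chosen so that (r + j + 1 - jt)_+ vanishes exactly when
  j + r \<ge> \<Omega>; together with a + b = t - 1 this makes the increments agree on both
  sides of that threshold.\<close>

lemma bin2_Suc: "bin2 (m + 1) = bin2 m + pos_part m"
proof -
  consider "m \<le> 0" | "m = 1" | "m \<ge> 2" by linarith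
  then show ?thesis
  proof cases
    case 3
    have "(m + 1) * (m + 1 - 1) = m * (m - 1) + m * 2" by (simp add: algebra_simps)
    then show ?thesis using 3 by (simp add: bin2_def pos_part_def)
  qed (simp_all add: bin2_def pos_part_def)
qed

lemma Omega_t_bounds:
  assumes "t > 1"
  shows "(Omega_t t r - 1) * (int t - 1) \<le> int t * int r"
    and "int t * int r < Omega_t t r * (int t - 1)"
proof -
  define q where "q = real t * real r / (real t - 1)"
  have t1: "real t - 1 > 0" using assms by simp
  have \<Omega>: "Omega_t t r = \<lfloor>q\<rfloor> + 1" using assms by (simp add: Omega_t_def q_def)
  have q: "q * (real t - 1) = real t * real r" using t1 by (simp add: q_def)
  have "real_of_int \<lfloor>q\<rfloor> * (real t - 1) \<le> real t * real r"
    using t1 of_int_floor_le[of q] q by (metis mult_right_mono less_imp_le)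
  then have "real_of_int (\<lfloor>q\<rfloor> * (int t - 1)) \<le> real_of_int (int t * int r)"
    using assms by simp
  then show "(Omega_t t r - 1) * (int t - 1) \<le> int t * int r"
    unfolding \<Omega> of_int_le_iff by simp
  have "real t * real r < (real_of_int \<lfloor>q\<rfloor> + 1) * (real t - 1)"
    using t1 real_of_int_floor_add_one_gt[of q] q by (metis mult_strict_right_mono)
  then have "real_of_int (int t * int r) < real_of_int ((\<lfloor>q\<rfloor> + 1) * (int t - 1))"
    using assms by simp
  then show "int t * int r < Omega_t t r * (int t - 1)"
    unfolding \<Omega> of_int_less_iff .
qed

lemma Omega_t_ge:
  assumes "t > 1"
  shows "Omega_t t r \<ge> int r + 1"
proof -
  have "int r * (int t - 1) < Omega_t t r * (int t - 1)"
    using Omega_t_bounds(2)[OF assms, of r] by (simp add: algebra_simps)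
  then show ?thesis using assms by (simp add: mult_less_cancel_right)
qed

lemma a_t_plus_b_t: "t > 1 \<Longrightarrow> a_t t r + b_t t r = int t - 1"
  by (simp add: b_t_def)

lemma vertex_increment:
  fixes t r j :: nat
  shows "int t * int j - b_t t r * pos_part (int j + int r + 1 - Omega_t t r)
           - a_t t r * pos_part (int j + int r - Omega_t t r)
         = int j + int r + 1 - pos_part (int j + int r + 1 - int j * int t)"
proof (cases "t > 1")
  case False
  then have "t = 0 \<or> t = 1" by auto
  then show ?thesis by (auto simp: a_t_def b_t_def Omega_t_def pos_part_def)
next
  case t: True
  let ?\<Omega> = "Omega_t t r"
  have t1: "int t - 1 > 0" using t by simp
  show ?thesis
  proof (cases "int j + int r + 1 \<le> ?\<Omega>")
    case below: True
    have "(int j + int r) * (int t - 1) \<le> (?\<Omega> - 1) * (int t - 1)"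
      using below t1 by (intro mult_right_mono) auto
    then have "int j * (int t - 1) \<le> int r"
      using Omega_t_bounds(1)[OF t, of r] by (simp add: algebra_simps)
    then show ?thesis using below by (simp add: pos_part_def algebra_simps)
  next
    case above: False
    have "?\<Omega> * (int t - 1) \<le> (int j + int r) * (int t - 1)"
      using above t1 by (intro mult_right_mono) auto
    then have "int j * (int t - 1) > int r"
      using Omega_t_bounds(2)[OF t, of r] by (simp add: algebra_simps)
    then have p1: "pos_part (int j + int r + 1 - int j * int t) = 0"
      by (simp add: pos_part_def algebra_simps)
    have p2: "pos_part (int j + int r + 1 - ?\<Omega>) = int j + int r + 1 - ?\<Omega>"
      and p3: "pos_part (int j + int r - ?\<Omega>) = int j + int r - ?\<Omega>"
      using above by (simp_all add: pos_part_def)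
    have a: "a_t t r = int t * (int r + 1) - (int t - 1) * ?\<Omega>"
      using t by (simp add: a_t_def algebra_simps)
    have b: "b_t t r = int t - 1 - a_t t r"
      using a_t_plus_b_t[OF t, of r] by simp
    show ?thesis unfolding p1 p2 p3 b a by (simp add: algebra_simps)
  qed
qed

lemma vertex_identity:
  fixes t r d :: nat
  shows "int t * bin2 (int d + 1)
         - b_t t r * bin2 (int (r + d) + 2 - Omega_t t r)
         - a_t t r * bin2 (int (r + d) + 1 - Omega_t t r)
       = bin2 (int (r + d) + 2) - bin2 (int r + 2)
         - (\<Sum>j=1..d. pos_part (int r + int j + 1 - int j * int t))"
proof (induction d)
  case 0
  show ?case
  proof (cases "t > 1")
    case True
    then show ?thesis using Omega_t_ge[OF True, of r] by (simp add: bin2_def)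
  qed (simp add: bin2_def a_t_def b_t_def)
next
  case (Suc d)
  have shift: "\<And>m. bin2 (m + int (Suc d)) = bin2 (m + int d) + pos_part (m + int d)"
    by (metis bin2_Suc add.assoc of_nat_Suc add.commute)
  have "bin2 (int (Suc d) + 1) = bin2 (int d + 1) + int (Suc d)"
    using shift[of 1] by (simp add: pos_part_def add.commute)
  moreover have "bin2 (int (r + Suc d) + 2) = bin2 (int (r + d) + 2) + (int (Suc d) + int r + 1)"
    using shift[of "int r + 2"] by (simp add: pos_part_def algebra_simps)
  moreover have "bin2 (int (r + Suc d) + 2 - Omega_t t r) = bin2 (int (r + d) + 2 - Omega_t t r)
       + pos_part (int (Suc d) + int r + 1 - Omega_t t r)"
    using shift[of "int r + 2 - Omega_t t r"] by (simp add: algebra_simps)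
  moreover have "bin2 (int (r + Suc d) + 1 - Omega_t t r) = bin2 (int (r + d) + 1 - Omega_t t r)
       + pos_part (int (Suc d) + int r - Omega_t t r)"
    using shift[of "int r + 1 - Omega_t t r"] by (simp add: algebra_simps)
  ultimately show ?case
    using Suc.IH vertex_increment[of t "Suc d" r]
    by (simp add: distrib_left algebra_simps)
qed

theorem proposition4p6:
  fixes T :: "(real^2) set set" and \<gamma> :: "nat \<Rightarrow> real^2" and r k :: nat
  assumes tri: "is_triangulation T"
    and conn: "connected (tri_support T)"
    and disk: "tri_support T homotopy_eqv cball (0::real^2) 1"
    and kr: "r \<le> k"
    and ord: "bij_betw \<gamma> {1..card (interior_vertices T)} (interior_vertices T)"
    and consec: "\<forall>i. 1 \<le> i \<and> i < card (interior_vertices T) \<longrightarrow>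
                   (\<exists>t\<in>T. \<gamma> i \<in> t \<and> \<gamma> (Suc i) \<in> t)"
  shows "bin2 (int k + 2) + int (card (interior_edges T)) * bin2 (int k + 2 - (int r + 1))
         - (\<Sum>i=1..card (interior_vertices T).
              int (t_tilde T \<gamma> i) * bin2 (int k + 2 - (int r + 1))
              - b_t (t_tilde T \<gamma> i) r * bin2 (int k + 2 - Omega_t (t_tilde T \<gamma> i) r)
              - a_t (t_tilde T \<gamma> i) r * bin2 (int k + 2 - (Omega_t (t_tilde T \<gamma> i) r + 1)))
       = bin2 (int k + 2) + int (card (interior_edges T)) * bin2 (int k - int r + 1)
         - int (card (interior_vertices T)) * (bin2 (int k + 2) - bin2 (int r + 2))
         + (\<Sum>i=1..card (interior_vertices T). \<Sum>j=1..k - r.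
              pos_part (int r + int j + 1 - int j * int (t_tilde T \<gamma> i)))"
proof -
  obtain d where k: "k = r + d" using kr le_Suc_ex by blast
  have vertex: "int t * bin2 (int k + 2 - (int r + 1))
        - b_t t r * bin2 (int k + 2 - Omega_t t r)
        - a_t t r * bin2 (int k + 2 - (Omega_t t r + 1))
      = (bin2 (int k + 2) - bin2 (int r + 2))
        - (\<Sum>j=1..k - r. pos_part (int r + int j + 1 - int j * int t))" for t
    using vertex_identity[of t d r] by (simp add: k algebra_simps)
  show ?thesis
    by (simp only: vertex sum_subtractf) (simp add: algebra_simps)
qed

end
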